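(* Let $k\ge 0$ be an integer and let $\sigma$ be a maximal simplex of $\mathrm{VR}(\mathbb{Z}^2;k)$. Then there is a point $c\in\mathbb{R}^2$, each of whose coordinates is an integer or a half-integer, such that $\sigma=B_{\mathbb{R}^2}[c,\tfrac{k}{2}]\cap\mathbb{Z}^2$.
   Context: $\mathbb{Z}^2$ and $\mathbb{R}^2$ carry the $l^1$ metric $d((x,y),(x',y'))=|x-x'|+|y-y'|$, and $B_{\mathbb{R}^2}[c,r]=\{p\in\mathbb{R}^2: d(p,c)\le r\}$. $\mathrm{VR}(X;r)$ is the simplicial complex on vertex set $X$ whose simplices are the finite nonempty subsets of diameter at most $r$; a maximal simplex is one not properly contained in another simplex. A half-integer is a number of the form $m+\tfrac12$ with $m\in\mathbb{Z}$. *)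

theory Defs
  imports "HOL-Analysis.Analysis"
begin

definition l1_int :: "int \<times> int \<Rightarrow> int \<times> int \<Rightarrow> int" where
  "l1_int p q = \<bar>fst p - fst q\<bar> + \<bar>snd p - snd q\<bar>"

definition l1_real :: "real \<times> real \<Rightarrow> real \<times> real \<Rightarrow> real" where
  "l1_real p q = \<bar>fst p - fst q\<bar> + \<bar>snd p - snd q\<bar>"

definition ball_R2 :: "real \<times> real \<Rightarrow> real \<Rightarrow> (real \<times> real) set" where
  "ball_R2 c r = {p. l1_real p c \<le> r}"

definition int_pt :: "int \<times> int \<Rightarrow> real \<times> real" where
  "int_pt p = (of_int (fst p), of_int (snd p))"

definition VR_simplex :: "real \<Rightarrow> (int \<times> int) set \<Rightarrow> bool" where
  "VR_simplex r S \<longleftrightarrow> finite S \<and> S \<noteq> {} \<and>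
     (\<forall>p\<in>S. \<forall>q\<in>S. real_of_int (l1_int p q) \<le> r)"

definition VR_maximal_simplex :: "real \<Rightarrow> (int \<times> int) set \<Rightarrow> bool" where
  "VR_maximal_simplex r S \<longleftrightarrow> VR_simplex r S \<and> (\<forall>T. VR_simplex r T \<longrightarrow> S \<subseteq> T \<longrightarrow> T = S)"

definition half_integer :: "real \<Rightarrow> bool" where
  "half_integer x \<longleftrightarrow> (\<exists>m::int. x = of_int m + 1/2)"

end

theory Submission
  imports Defs
begin

text \<open>In the rotated coordinates u = x + y, v = x - y the l1 metric becomes the max metric,
  so l1 balls are axis-parallel squares in (u, v). A set of diameter at most k therefore lies in
  the square [a, a + k] \<times> [b, b + k], where a and b are the minima of u and v over the set.
  The lattice points of that square again have diameter at most k, so by maximality they form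
  the simplex itself; and the square is the l1 ball of radius k/2 about the point with
  u = a + k/2, v = b + k/2, whose coordinates (a + b + k)/2 and (a - b)/2 are halves of integers.\<close>

lemma abs_add_abs_eq_max_abs: "\<bar>x\<bar> + \<bar>y\<bar> = max \<bar>x + y\<bar> \<bar>x - y\<bar>"
  for x y :: "'a::linordered_idom"
  by (simp add: abs_if max_def)

lemma l1_int_le_iff:
  "l1_int p q \<le> r \<longleftrightarrow>
     \<bar>(fst p + snd p) - (fst q + snd q)\<bar> \<le> r \<and> \<bar>(fst p - snd p) - (fst q - snd q)\<bar> \<le> r"
  using abs_add_abs_eq_max_abs[of "fst p - fst q" "snd p - snd q"]
  by (simp add: l1_int_def algebra_simps)

lemma l1_real_le_iff:
  "l1_real p q \<le> r \<longleftrightarrow>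
     \<bar>(fst p + snd p) - (fst q + snd q)\<bar> \<le> r \<and> \<bar>(fst p - snd p) - (fst q - snd q)\<bar> \<le> r"
  using abs_add_abs_eq_max_abs[of "fst p - fst q" "snd p - snd q"]
  by (simp add: l1_real_def algebra_simps)

definition diag_box :: "int \<Rightarrow> int \<Rightarrow> int \<Rightarrow> (int \<times> int) set" where
  "diag_box a b r = {p. a \<le> fst p + snd p \<and> fst p + snd p \<le> a + r \<and>
                         b \<le> fst p - snd p \<and> fst p - snd p \<le> b + r}"

lemma finite_diag_box: "finite (diag_box a b r)"
proof (rule finite_subset)
  let ?M = "\<bar>a\<bar> + \<bar>b\<bar> + \<bar>r\<bar>"
  show "diag_box a b r \<subseteq> {-?M..?M} \<times> {-?M..?M}"
    by (auto simp: diag_box_def)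
qed simp

lemma l1_int_le_in_diag_box:
  assumes "p \<in> diag_box a b r" "q \<in> diag_box a b r"
  shows "l1_int p q \<le> r"
  using assms by (auto simp: diag_box_def l1_int_le_iff)

lemma VR_simplex_diag_box:
  assumes "diag_box a b r \<noteq> {}"
  shows "VR_simplex (real_of_int r) (diag_box a b r)"
  using assms finite_diag_box l1_int_le_in_diag_box by (simp add: VR_simplex_def)

lemma subset_diag_box_Min:
  assumes "finite S" "S \<noteq> {}" and diam: "\<And>p q. p \<in> S \<Longrightarrow> q \<in> S \<Longrightarrow> l1_int p q \<le> r"
  shows "S \<subseteq> diag_box (MIN p\<in>S. fst p + snd p) (MIN p\<in>S. fst p - snd p) r"
proof
  fix p assume "p \<in> S"
  have "(MIN p\<in>S. fst p + snd p) \<in> (\<lambda>p. fst p + snd p) ` S"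
    "(MIN p\<in>S. fst p - snd p) \<in> (\<lambda>p. fst p - snd p) ` S"
    using assms(1,2) by (simp_all add: Min_in)
  then obtain qu qv where qu: "qu \<in> S" "(MIN p\<in>S. fst p + snd p) = fst qu + snd qu"
    and qv: "qv \<in> S" "(MIN p\<in>S. fst p - snd p) = fst qv - snd qv"
    by blast
  have "(MIN p\<in>S. fst p + snd p) \<le> fst p + snd p" "(MIN p\<in>S. fst p - snd p) \<le> fst p - snd p"
    using \<open>p \<in> S\<close> assms(1) by (auto intro: Min_le)
  moreover have "l1_int p qu \<le> r" "l1_int p qv \<le> r"
    using diam \<open>p \<in> S\<close> qu(1) qv(1) by auto
  ultimately show "p \<in> diag_box (MIN p\<in>S. fst p + snd p) (MIN p\<in>S. fst p - snd p) r"
    unfolding qu(2) qv(2) by (auto simp: diag_box_def l1_int_le_iff)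
qed

lemma abs_diff_le_half_iff: "\<bar>x - (a + r / 2)\<bar> \<le> r / 2 \<longleftrightarrow> a \<le> x \<and> x \<le> a + r"
  for x a r :: "'a::linordered_field"
  by (auto simp: abs_le_iff field_simps)

lemma diag_box_eq_ball_R2:
  "diag_box a b r =
     {p. int_pt p \<in> ball_R2 (real_of_int (a + b + r) / 2, real_of_int (a - b) / 2) (real_of_int r / 2)}"
proof -
  have center: "real_of_int (a + b + r) / 2 + real_of_int (a - b) / 2 = a + r / 2"
    "real_of_int (a + b + r) / 2 - real_of_int (a - b) / 2 = b + r / 2"
    by (simp_all add: field_simps)
  show ?thesis
  proof (intro set_eqI)
    fix p :: "int \<times> int"
    have "int_pt p \<in> ball_R2 (real_of_int (a + b + r) / 2, real_of_int (a - b) / 2) (real_of_int r / 2)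
      \<longleftrightarrow> \<bar>real_of_int (fst p + snd p) - (a + r / 2)\<bar> \<le> r / 2 \<and>
          \<bar>real_of_int (fst p - snd p) - (b + r / 2)\<bar> \<le> r / 2"
      unfolding ball_R2_def int_pt_def mem_Collect_eq l1_real_le_iff fst_conv snd_conv center
      by simp
    then show "p \<in> diag_box a b r \<longleftrightarrow> p \<in> {p. int_pt p \<in> ball_R2
        (real_of_int (a + b + r) / 2, real_of_int (a - b) / 2) (real_of_int r / 2)}"
      unfolding abs_diff_le_half_iff diag_box_def mem_Collect_eq of_int_add[symmetric] of_int_le_iff
      by blast
  qed
qed

lemma int_or_half_integer_half: "real_of_int n / 2 \<in> \<int> \<or> half_integer (real_of_int n / 2)"
proof (cases "even n")
  case True
  then show ?thesis by (auto elim: evenE)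
next
  case False
  then obtain m where "n = 2 * m + 1" by (auto elim: oddE)
  then have "real_of_int n / 2 = of_int m + 1 / 2" by simp
  then show ?thesis unfolding half_integer_def by blast
qed

theorem lemma4p1:
  fixes k :: nat and \<sigma> :: "(int \<times> int) set"
  assumes "VR_maximal_simplex (real k) \<sigma>"
  shows "\<exists>c :: real \<times> real.
           (fst c \<in> \<int> \<or> half_integer (fst c)) \<and>
           (snd c \<in> \<int> \<or> half_integer (snd c)) \<and>
           \<sigma> = {p. int_pt p \<in> ball_R2 c (real k / 2)}"
proof -
  define a where "a = (MIN p\<in>\<sigma>. fst p + snd p)"
  define b where "b = (MIN p\<in>\<sigma>. fst p - snd p)"
  have simplex: "VR_simplex (real k) \<sigma>"
    and maximal: "\<And>T. VR_simplex (real k) T \<Longrightarrow> \<sigma> \<subseteq> T \<Longrightarrow> T = \<sigma>"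
    using assms by (auto simp: VR_maximal_simplex_def)
  have "\<And>p q. p \<in> \<sigma> \<Longrightarrow> q \<in> \<sigma> \<Longrightarrow> l1_int p q \<le> int k"
    using simplex unfolding VR_simplex_def by (metis of_int_le_iff of_int_of_nat_eq)
  with simplex have "\<sigma> \<subseteq> diag_box a b (int k)"
    unfolding a_def b_def by (intro subset_diag_box_Min) (auto simp: VR_simplex_def)
  moreover from this simplex have "VR_simplex (real k) (diag_box a b (int k))"
    using VR_simplex_diag_box[of a b "int k"] by (auto simp: VR_simplex_def)
  ultimately have "\<sigma> = diag_box a b (int k)"
    using maximal by auto
  then show ?thesis
    using diag_box_eq_ball_R2[of a b "int k"]
      int_or_half_integer_half[of "a + b + int k"] int_or_half_integer_half[of "a - b"]
    by (intro exI[of _ "(real_of_int (a + b + int k) / 2, real_of_int (a - b) / 2)"]) simp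
qed

end
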